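(* Let $n\ge -1$ and let $C_n$ be the cochain complex described in the context. Every admissible monomial $v_0^{k_0}v_1^{k_1}\cdots v_n^{k_n}R^{a_1}R^{a_2}\cdots R^{a_m}y_1$ in which all of $a_1,\dots,a_m$ are odd is a cocycle in $C_n$.
   Context: Work at the prime $2$. Fix an integer $n\ge -1$. Consider formal monomials $v_0^{k_0}\cdots v_n^{k_n}R^{a_1}\cdots R^{a_m}y_k$ with $k_i\ge 0$, $m\ge 0$, integers $a_i$, and $k\ge 1$. Such a monomial is admissible if $a_i\ge 2a_{i+1}$ for $1\le i<m$ and $a_m\ge 2^{k+1}$ (when $m\ge1$). $C_n$ has $\mathbb{F}_2$-basis the admissible monomials. Gradings: the filtration of a monomial is $s=\sum k_i + m$; its homological degree $h$ is defined by $h(y_k)=2^{k+1}-2$, each $R^a$ adds $a-1$, each $v_i$ subtracts $2^{i+1}-1$; its total degree is $-h-s$. Non-admissible expressions are rewritten in the basis using: $v_iv_j=v_jv_i$; $R^a v_i=\sum_{i<j\le n} v_j R^{a-2^{i+1}+2^{j+1}}$ (so $R^av_n=0$); the Adem relation $R^aR^b=\sum_c\binom{b-1-c}{a-2c}R^{a+b-c}R^c$ for $a<2b$; and instability: $R^c z=0$ whenever $z$ is a monomial with $h(z)\ge c-1$. The differential $d$ is $\mathbb{F}_2$-linear, raises filtration by $1$ and lowers total degree by $1$, and is determined by $dy_k=\sum_{1\le j<k}R^{2^{k+1}-2^{j+1}+1}y_j$ (so $dy_1=0$), $d(v_ix)=v_i\,dx$, and $d(R^ax)=R^a(dx)+(a+1)\sum_{0\le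 j\le n}v_jR^{a+2^{j+1}-1}x$, followed by rewriting in the basis. (This is the Koszul complex computing $\mathrm{Ext}_{E(n)R}(QH_*BP,\mathbb{F}_2)$.) *)

theory Defs
  imports Main
begin

text \<open>Letters of formal words: V i = v_i, R a = R^a, Y k = y_k.
  A word (letter list) is read left to right, e.g. [V 0, R 5, Y 1] = v_0 R^5 y_1.
  Elements of F_2-vector spaces are finite sets of words; addition is symmetric difference.\<close>

datatype letter = V nat | R int | Y nat

type_synonym word = "letter list"

definition plus2 :: "word set \<Rightarrow> word set \<Rightarrow> word set" where
  "plus2 A B = (A - B) \<union> (B - A)"

definition zbinom :: "int \<Rightarrow> int \<Rightarrow> nat" where
  "zbinom m k = (if 0 \<le> k \<and> k \<le> m then nat m choose nat k else 0)"

definition ok_letter :: "int \<Rightarrow> letter \<Rightarrow> bool" where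
  "ok_letter n l = (case l of V i \<Rightarrow> int i \<le> n | R a \<Rightarrow> True | Y k \<Rightarrow> False)"

definition ok_prefix :: "int \<Rightarrow> word \<Rightarrow> bool" where
  "ok_prefix n p = (\<forall>l \<in> set p. ok_letter n l)"

definition ok_tail :: "int \<Rightarrow> word \<Rightarrow> bool" where
  "ok_tail n s = (\<exists>ws k. s = ws @ [Y k] \<and> 1 \<le> k \<and> ok_prefix n ws)"

fun hl :: "letter \<Rightarrow> int" where
  "hl (V i) = - ((2::int) ^ (i + 1) - 1)"
| "hl (R a) = a - 1"
| "hl (Y k) = (2::int) ^ (k + 1) - 2"

definition hdeg :: "word \<Rightarrow> int" where
  "hdeg w = sum_list (map hl w)"

text \<open>Generating relations (each an F_2-linear combination of words that is zero in C_n),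
  applicable anywhere inside a word: prefix p, suffix s.\<close>
definition rel_gens :: "int \<Rightarrow> word set set" where
  "rel_gens n =
     {plus2 {p @ [V i, V j] @ s} {p @ [V j, V i] @ s} | p s i j.
        ok_prefix n p \<and> ok_tail n s \<and> int i \<le> n \<and> int j \<le> n}
   \<union> {plus2 {p @ [R a, V i] @ s}
            {p @ [V j, R (a - 2 ^ (i + 1) + 2 ^ (j + 1))] @ s | j. i < j \<and> int j \<le> n} | p s a i.
        ok_prefix n p \<and> ok_tail n s \<and> int i \<le> n}
   \<union> {plus2 {p @ [R a, R b] @ s}
            {p @ [R (a + b - c), R c] @ s | c. odd (zbinom (b - 1 - c) (a - 2 * c))} | p s a b.
        ok_prefix n p \<and> ok_tail n s \<and> a < 2 * b}
   \<union> {{p @ [R c] @ z} | p c z.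
        ok_prefix n p \<and> ok_tail n z \<and> hdeg z \<ge> c - 1}"

text \<open>The F_2-span of the relations: exactly the combinations of words that vanish in C_n.\<close>
inductive_set rel_span :: "int \<Rightarrow> word set set" for n :: int where
  zero: "{} \<in> rel_span n"
| add: "g \<in> rel_gens n \<Longrightarrow> S \<in> rel_span n \<Longrightarrow> plus2 g S \<in> rel_span n"

text \<open>The differential on words (before rewriting in the basis).\<close>
fun dw :: "int \<Rightarrow> word \<Rightarrow> word set" where
  "dw n [] = {}"
| "dw n [Y k] = {[R ((2::int) ^ (k + 1) - 2 ^ (j + 1) + 1), Y j] | j. 1 \<le> j \<and> j < k}"
| "dw n (Y k # l # ls) = {}"
| "dw n (V i # w) = Cons (V i) ` dw n w"
| "dw n (R a # w) = plus2 (Cons (R a) ` dw n w)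
      (if even a then {[V j, R (a + 2 ^ (j + 1) - 1)] @ w | j. int j \<le> n} else {})"

definition monomial :: "nat list \<Rightarrow> int list \<Rightarrow> nat \<Rightarrow> word" where
  "monomial ks as k =
     concat (map (\<lambda>i. replicate (ks ! i) (V i)) [0..<length ks]) @ map R as @ [Y k]"

definition admissible :: "int \<Rightarrow> nat list \<Rightarrow> int list \<Rightarrow> nat \<Rightarrow> bool" where
  "admissible n ks as k =
     (length ks = nat (n + 1) \<and> 1 \<le> k \<and>
      (\<forall>i. Suc i < length as \<longrightarrow> as ! i \<ge> 2 * as ! Suc i) \<and>
      (as \<noteq> [] \<longrightarrow> last as \<ge> 2 ^ (k + 1)))"

definition cocycle :: "int \<Rightarrow> word \<Rightarrow> bool" where
  "cocycle n x = (dw n x \<in> rel_span n)"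

end

theory Submission
  imports Defs
begin

text \<open>Since d y_1 = 0 and the correction term of d(R^a x) carries the factor a + 1, the
  differential vanishes identically, before any rewriting, on words built from letters v_i
  and R^a with a odd, followed by y_1.\<close>

definition odd_letter :: "letter \<Rightarrow> bool" where
  "odd_letter l = (case l of V i \<Rightarrow> True | R a \<Rightarrow> odd a | Y k \<Rightarrow> False)"

lemma dw_odd_letters_Y1:
  assumes "\<forall>l \<in> set p. odd_letter l"
  shows "dw n (p @ [Y 1]) = {}"
  using assms
proof (induction p)
  case Nil
  then show ?case by simp
next
  case (Cons l p)
  then have IH: "dw n (p @ [Y 1]) = {}" and "odd_letter l" by simp_all
  then show ?case
    by (cases l) (simp_all add: odd_letter_def plus2_def)
qed

theorem mainTheorem4:
  fixes n :: int and ks :: "nat list" and as :: "int list"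
  assumes "n \<ge> -1"
    and "admissible n ks as 1"
    and "\<forall>a \<in> set as. odd a"
  shows "cocycle n (monomial ks as 1)"
proof -
  let ?p = "concat (map (\<lambda>i. replicate (ks ! i) (V i)) [0..<length ks]) @ map R as"
  have "\<forall>l \<in> set ?p. odd_letter l"
    using assms(3) by (auto simp: odd_letter_def)
  then have "dw n (monomial ks as 1) = {}"
    unfolding monomial_def using dw_odd_letters_Y1[of ?p n] by simp
  then show ?thesis
    unfolding cocycle_def by (simp add: rel_span.zero)
qed

end
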